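(* Let $q\ge2$, $G\in\mathbb G^q$, $S=\Psi(G)$, and let $i\neq j$ in $\{1,\dots,q\}$. Let $S_{ij}$ be the subgraph of $S$ consisting of all edges of colors $i$ and $j$ together with their endpoints. If $S_{ij}$ is a forest, then for every color-$0$ edge of $G$, its two endpoints belong to the same color-$ij$ cycle of $G$ (i.e. the same connected component of the subgraph of $G$ formed by the edges of colors $i$ and $j$).
   Context: Fix an integer $q\ge 2$. A $(q+1)$-edge-colored graph (colored graph) is a finite connected graph, multiple edges allowed and no loops, whose edges carry colors in $\{0,1,\dots,q\}$ such that every vertex is incident to exactly one edge of each color. It is rooted if one color-0 edge is distinguished and oriented; it is bipartite if its vertices can be colored black and white so that every edge joins a black and a white vertex, with the convention that the origin of the root edge is black. $\mathbb G^q$ denotes the set of rooted bipartite colored graphs. Constellations: given $G\in\mathbb G^q$, its constellation $S=\Psi(G)$ is obtained as follows: orient every edge from its black to its white endpoint; contract every color-0 edge into a single vertex, called a white vertex of $S$. For each $i\in\{1,\dots,q\}$ the color-$i$ edges now form directed cycles; for each such cycle, passing through white vertices $w_1,\dots,w_p$ in this cyclic order, add a new vertex of color $i$ joined by one color-$i$ edge to each $w_k$, equip the new vertex with the cyclic order $(w_1,\dots,w_p)$ of its incident edges, and delete the original color-$i$ edges of the cycle. *)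

theory Defs
  imports Main
begin

text \<open>A (q+1)-edge-colored multigraph: vertex set, edge set (edges are objects, so
multiple edges are allowed), endpoint map, colour map, plus a root edge and the origin
of its orientation.\<close>

record ('v, 'e) cgraph =
  gV    :: "'v set"
  gE    :: "'e set"
  gends :: "'e \<Rightarrow> 'v set"
  gcol  :: "'e \<Rightarrow> nat"
  groot :: "'e"
  gorig :: "'v"

definition adj_rel :: "('v, 'e) cgraph \<Rightarrow> nat set \<Rightarrow> ('v \<times> 'v) set" where
  "adj_rel G C = {(u, v). \<exists>e\<in>gE G. gcol G e \<in> C \<and> gends G e = {u, v}}"

definition colored_graph :: "nat \<Rightarrow> ('v, 'e) cgraph \<Rightarrow> bool" where
  "colored_graph q G \<longleftrightarrow>
     finite (gV G) \<and> finite (gE G) \<and> gV G \<noteq> {} \<and>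
     (\<forall>e\<in>gE G. gends G e \<subseteq> gV G \<and> card (gends G e) = 2 \<and> gcol G e \<le> q) \<and>
     (\<forall>v\<in>gV G. \<forall>c\<le>q. \<exists>!e. e \<in> gE G \<and> v \<in> gends G e \<and> gcol G e = c) \<and>
     (\<forall>u\<in>gV G. \<forall>v\<in>gV G. (u, v) \<in> (adj_rel G {0..q})\<^sup>*)"

text \<open>Membership in \<open>\<G>^q\<close>: rooted bipartite colored graph; \<open>black\<close> is the black/white
colouring with the origin of the root edge black.\<close>

definition rooted_bipartite :: "nat \<Rightarrow> ('v, 'e) cgraph \<Rightarrow> ('v \<Rightarrow> bool) \<Rightarrow> bool" where
  "rooted_bipartite q G black \<longleftrightarrow>
     colored_graph q G \<and>
     groot G \<in> gE G \<and> gcol G (groot G) = 0 \<and> gorig G \<in> gends G (groot G) \<and>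
     (\<forall>e\<in>gE G. \<exists>b w. gends G e = {b, w} \<and> black b \<and> \<not> black w) \<and>
     black (gorig G)"

definition black_end :: "('v, 'e) cgraph \<Rightarrow> ('v \<Rightarrow> bool) \<Rightarrow> 'e \<Rightarrow> 'v" where
  "black_end G black e = (THE v. v \<in> gends G e \<and> black v)"

definition white_end :: "('v, 'e) cgraph \<Rightarrow> ('v \<Rightarrow> bool) \<Rightarrow> 'e \<Rightarrow> 'v" where
  "white_end G black e = (THE v. v \<in> gends G e \<and> \<not> black v)"

definition zero_edge :: "('v, 'e) cgraph \<Rightarrow> 'v \<Rightarrow> 'e" where
  "zero_edge G v = (THE f. f \<in> gE G \<and> v \<in> gends G f \<and> gcol G f = 0)"

text \<open>After contracting colour-0 edges (white vertices of the constellation = colour-0 edges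
of G), a colour-c edge e, oriented black to white, becomes an arc between white vertices.\<close>

definition contr_arcs :: "('v, 'e) cgraph \<Rightarrow> ('v \<Rightarrow> bool) \<Rightarrow> nat \<Rightarrow> ('e \<times> 'e) set" where
  "contr_arcs G black c =
     {(zero_edge G (black_end G black e), zero_edge G (white_end G black e)) | e.
        e \<in> gE G \<and> gcol G e = c}"

text \<open>The directed colour-c cycle through the white vertex f (as its vertex set).\<close>

definition contr_cycle :: "('v, 'e) cgraph \<Rightarrow> ('v \<Rightarrow> bool) \<Rightarrow> nat \<Rightarrow> 'e \<Rightarrow> 'e set" where
  "contr_cycle G black c f = {g. (f, g) \<in> (contr_arcs G black c)\<^sup>*}"

text \<open>Vertices: \<open>Inl f\<close> for white vertices (colour-0 edges f),
\<open>Inr (c, C)\<close> for the new vertex of colour c attached to the colour-c cycle C.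
Edges: the new vertex of a colour-c cycle through \<open>w\<^sub>1,\<dots>,w\<^sub>p\<close> gets one edge to each \<open>w\<^sub>k\<close>; we
index the edge to \<open>w\<^sub>k\<close> by the colour-c edge of G leaving \<open>w\<^sub>k\<close> (a bijection).  The edge
colour is that of the indexing edge.  (The cyclic orders are not needed here.)\<close>

definition psi_verts :: "nat \<Rightarrow> ('v, 'e) cgraph \<Rightarrow> ('v \<Rightarrow> bool) \<Rightarrow> ('e + nat \<times> 'e set) set" where
  "psi_verts q G black =
     Inl ` {f \<in> gE G. gcol G f = 0} \<union>
     {Inr (c, contr_cycle G black c f) | c f. 1 \<le> c \<and> c \<le> q \<and> f \<in> gE G \<and> gcol G f = 0}"

definition psi_edges :: "nat \<Rightarrow> ('v, 'e) cgraph \<Rightarrow> 'e set" where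
  "psi_edges q G = {e \<in> gE G. 1 \<le> gcol G e \<and> gcol G e \<le> q}"

definition psi_ends :: "('v, 'e) cgraph \<Rightarrow> ('v \<Rightarrow> bool) \<Rightarrow> 'e \<Rightarrow> ('e + nat \<times> 'e set) set" where
  "psi_ends G black e =
     (let w = zero_edge G (black_end G black e)
      in {Inl w, Inr (gcol G e, contr_cycle G black (gcol G e) w)})"

definition psi_sub_edges :: "nat \<Rightarrow> ('v, 'e) cgraph \<Rightarrow> nat \<Rightarrow> nat \<Rightarrow> 'e set" where
  "psi_sub_edges q G i j = {e \<in> psi_edges q G. gcol G e = i \<or> gcol G e = j}"

text \<open>Cycles and forests in a multigraph given by an edge set and an endpoint map
(a cycle of length 2 consists of two parallel edges; length 1 would be a loop).\<close>

definition has_cycle :: "'e set \<Rightarrow> ('e \<Rightarrow> 'a set) \<Rightarrow> bool" where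
  "has_cycle Es ends \<longleftrightarrow>
     (\<exists>es vs. length es = length vs \<and> length es \<ge> 1 \<and> distinct es \<and> distinct vs \<and>
        set es \<subseteq> Es \<and>
        (\<forall>k < length es. ends (es ! k) = {vs ! k, vs ! ((k + 1) mod length es)}))"

definition is_forest :: "'e set \<Rightarrow> ('e \<Rightarrow> 'a set) \<Rightarrow> bool" where
  "is_forest Es ends \<longleftrightarrow> \<not> has_cycle Es ends"

end

theory Submission
  imports Defs
begin

text \<open>Suppose the ends b (black) and w (white) of a colour-0 edge f lie in different ij-cycles
of G. Following the colour-i edge from a black vertex and then the colour-j edge from the white
vertex reached permutes the black vertices, and the orbit of b runs along the ij-cycle of b.
In the constellation each step of this orbit becomes a path white -- i-vertex -- white --
j-vertex -- white inside \<open>S\<^sub>i\<^sub>j\<close>, because a contracted colour-c arc never leaves its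
colour-c cycle. Together these paths form a closed walk in \<open>S\<^sub>i\<^sub>j\<close> that meets the white
vertex f only at its ends (the ij-cycle of b avoids w) and whose first and last edges have
different colours; such a walk contains a cycle, so \<open>S\<^sub>i\<^sub>j\<close> is not a forest.\<close>

lemma distinct_closed_walk_has_cycle:
  fixes x :: "nat \<Rightarrow> 'a" and e :: "nat \<Rightarrow> 'e"
  assumes walk: "\<forall>m<n. e m \<in> Es \<and> ends (e m) = {x m, x (Suc m)}"
    and closed: "x n = x 0"
    and inj: "inj_on x {..<n}"
    and first_last: "e 0 \<noteq> e (n - 1)"
  shows "has_cycle Es ends"
proof -
  have "n - 1 \<noteq> 0"
    using first_last by auto
  then have n2: "n \<ge> 2"
    by simp
  have next_mod: "x (Suc m) = x (Suc m mod n)" if "m < n" for m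
    using that closed by (cases "Suc m = n") auto
  have "e k \<noteq> e l" if kl: "k < l" "l < n" for k l
  proof
    assume eq: "e k = e l"
    then have "{x k, x (Suc k)} = {x l, x (Suc l)}"
      using walk kl by (metis order.strict_trans)
    moreover have "x k \<noteq> x l"
      using inj kl by (auto dest: inj_onD)
    ultimately have k_next: "x k = x (Suc l)" and l_next: "x l = x (Suc k)"
      by (auto simp: doubleton_eq_iff)
    have "l = Suc k"
      using inj_onD[OF inj l_next] kl by simp
    moreover have "Suc l = n"
    proof (rule ccontr)
      assume "Suc l \<noteq> n"
      then have "k = Suc l"
        using inj_onD[OF inj k_next] kl by simp
      with kl show False by simp
    qed
    moreover have "k = 0"
      using k_next \<open>Suc l = n\<close> closed inj_onD[OF inj] kl n2 by fastforce
    ultimately show False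
      using eq first_last by auto
  qed
  then have "inj_on e {0..<n}"
    unfolding inj_on_def by (metis atLeastLessThan_iff nat_neq_iff)
  then show ?thesis
    unfolding has_cycle_def using walk inj n2 next_mod
    by (intro exI[of _ "map e [0..<n]"] exI[of _ "map x [0..<n]"])
       (auto simp: distinct_map lessThan_atLeast0)
qed

lemma closed_walk_has_cycle:
  fixes x :: "nat \<Rightarrow> 'a" and e :: "nat \<Rightarrow> 'e"
  assumes "\<forall>m<n. e m \<in> Es \<and> ends (e m) = {x m, x (Suc m)}"
    and "x n = x 0"
    and "\<forall>m. 0 < m \<and> m < n \<longrightarrow> x m \<noteq> x 0"
    and "e 0 \<noteq> e (n - 1)"
  shows "has_cycle Es ends"
  using assms
proof (induction n arbitrary: x e rule: less_induct)
  case (less n)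
  note walk = less.prems(1) and closed = less.prems(2) and start = less.prems(3)
    and first_last = less.prems(4)
  show ?case
  proof (cases "inj_on x {..<n}")
    case True
    then show ?thesis
      using distinct_closed_walk_has_cycle walk closed first_last by blast
  next
    case False
    then obtain a b where ab: "a < b" "b < n" "x a = x b"
      unfolding inj_on_def by (metis lessThan_iff nat_neq_iff)
    have "0 < a"
      using ab start by (metis gr0I)
    \<comment> \<open>cut out the closed subwalk from position a to position b\<close>
    define d where "d = b - a"
    define x' where "x' k = (if k < a then x k else x (k + d))" for k
    define e' where "e' k = (if k < a then e k else e (k + d))" for k
    have shorter: "n - d < n" and "a < n - d"
      using ab d_def by auto
    show ?thesis
    proof (rule less.IH[OF shorter, of e' x'])
      show "\<forall>m<n - d. e' m \<in> Es \<and> ends (e' m) = {x' m, x' (Suc m)}"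
      proof (intro allI impI)
        fix m assume "m < n - d"
        consider "Suc m < a" | "Suc m = a" | "a \<le> m"
          by linarith
        then show "e' m \<in> Es \<and> ends (e' m) = {x' m, x' (Suc m)}"
          by cases (use walk ab \<open>m < n - d\<close> in \<open>auto simp: e'_def x'_def d_def\<close>)
      qed
      show "x' (n - d) = x' 0"
        using closed \<open>0 < a\<close> \<open>a < n - d\<close> ab by (simp add: x'_def d_def)
      show "\<forall>m. 0 < m \<and> m < n - d \<longrightarrow> x' m \<noteq> x' 0"
        using start \<open>0 < a\<close> ab by (auto simp: x'_def d_def)
      show "e' 0 \<noteq> e' (n - d - 1)"
        using first_last \<open>0 < a\<close> \<open>a < n - d\<close> ab by (simp add: e'_def d_def)
    qed
  qed
qed

lemma finite_inj_endo_bij_betw: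
  "finite A \<Longrightarrow> f ` A \<subseteq> A \<Longrightarrow> inj_on f A \<Longrightarrow> bij_betw f A A"
  by (simp add: bij_betw_def endo_inj_surj)

lemma bij_betw_funpow_period:
  assumes "finite A" "bij_betw f A A" "x \<in> A"
  obtains n where "n > 0" "(f ^^ n) x = x"
proof -
  have in_A: "(f ^^ m) y \<in> A" if "y \<in> A" for m y
    using bij_betwE[OF bij_betw_funpow[OF assms(2)]] that by blast
  have "\<not> inj_on (\<lambda>m. (f ^^ m) x) {0..card A}"
  proof
    assume "inj_on (\<lambda>m. (f ^^ m) x) {0..card A}"
    then have "card {0..card A} \<le> card A"
      using card_inj_on_le[OF _ _ assms(1)] in_A[OF assms(3)] by blast
    then show False by simp
  qed
  then obtain a b where ab: "a < b" "(f ^^ a) x = (f ^^ b) x"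
    unfolding inj_on_def by (metis nat_neq_iff)
  have "(f ^^ a) ((f ^^ (b - a)) x) = (f ^^ a) x"
    using ab by (simp flip: funpow_add[THEN fun_cong, unfolded comp_def])
  then have "(f ^^ (b - a)) x = x"
    using bij_betw_imp_inj_on[OF bij_betw_funpow[OF assms(2)]] in_A assms(3)
    by (auto dest: inj_onD)
  with that show thesis
    using ab by (metis zero_less_diff)
qed

lemma bij_betw_funpow_least_period:
  assumes "finite A" "bij_betw f A A" "x \<in> A"
  obtains k where "0 < k" "(f ^^ k) x = x" "\<And>l. 0 < l \<Longrightarrow> l < k \<Longrightarrow> (f ^^ l) x \<noteq> x"
proof -
  obtain n where "0 < n" "(f ^^ n) x = x"
    using bij_betw_funpow_period[OF assms] .
  define k where "k = (LEAST n. 0 < n \<and> (f ^^ n) x = x)"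
  have "0 < k \<and> (f ^^ k) x = x"
    unfolding k_def by (rule LeastI[of _ n]) (use \<open>0 < n\<close> \<open>(f ^^ n) x = x\<close> in simp)
  moreover have "(f ^^ l) x \<noteq> x" if "0 < l" "l < k" for l
    using not_less_Least[of l "\<lambda>n. 0 < n \<and> (f ^^ n) x = x"] that by (simp add: k_def)
  ultimately show thesis
    using that by blast
qed

lemma bij_betw_rtrancl_backward:
  assumes "finite A" "bij_betw f A A" "x \<in> A" and steps: "\<forall>y\<in>A. (y, f y) \<in> R"
  shows "(f x, x) \<in> R\<^sup>*"
proof -
  obtain n where "n > 0" "(f ^^ n) x = x"
    using bij_betw_funpow_period[OF assms(1-3)] .
  moreover have "(y, (f ^^ m) y) \<in> R\<^sup>*" if "y \<in> A" for m y
    using that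
  proof (induction m arbitrary: y)
    case (Suc m)
    have "(f y, (f ^^ m) (f y)) \<in> R\<^sup>*"
      using Suc bij_betwE[OF assms(2)] by blast
    then show ?case
      using steps Suc.prems by (simp add: funpow_swap1 converse_rtrancl_into_rtrancl[of y "f y"])
  qed simp
  ultimately show ?thesis
    using bij_betwE[OF assms(2)] assms(3) by (metis Suc_pred funpow_simps_right(2) comp_apply)
qed

lemma nat_div4_cases:
  fixes m :: nat
  obtains l where "m = 4 * l" | l where "m = 4 * l + 1" | l where "m = 4 * l + 2"
    | l where "m = 4 * l + 3"
proof -
  have "m = 4 * (m div 4) \<or> m = 4 * (m div 4) + 1 \<or> m = 4 * (m div 4) + 2 \<or> m = 4 * (m div 4) + 3"
    by presburger
  then show thesis
    using that[of "m div 4"] by blast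
qed

lemma sym_adj_rel: "sym (adj_rel G C)"
  unfolding adj_rel_def sym_def by (auto simp: insert_commute)

definition color_edge :: "('v, 'e) cgraph \<Rightarrow> nat \<Rightarrow> 'v \<Rightarrow> 'e" where
  "color_edge G c v = (THE e. e \<in> gE G \<and> v \<in> gends G e \<and> gcol G e = c)"

lemma zero_edge_eq_color_edge: "zero_edge G = color_edge G 0"
  by (simp add: fun_eq_iff zero_edge_def color_edge_def)

locale rooted_bipartite_graph =
  fixes q :: nat and G :: "('v, 'e) cgraph" and black :: "'v \<Rightarrow> bool"
  assumes rooted_bipartite: "rooted_bipartite q G black"
begin

lemma colored_graph: "colored_graph q G"
  using rooted_bipartite by (simp add: rooted_bipartite_def)

lemma finite_vertices: "finite (gV G)"
  using colored_graph by (simp add: colored_graph_def)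

lemma finite_edges: "finite (gE G)"
  using colored_graph by (simp add: colored_graph_def)

lemma ends_in_vertices: "e \<in> gE G \<Longrightarrow> v \<in> gends G e \<Longrightarrow> v \<in> gV G"
  using colored_graph by (auto simp: colored_graph_def)

lemma edge_color_le: "e \<in> gE G \<Longrightarrow> gcol G e \<le> q"
  using colored_graph by (simp add: colored_graph_def)

lemma unique_color_edge: "v \<in> gV G \<Longrightarrow> c \<le> q \<Longrightarrow> \<exists>!e. e \<in> gE G \<and> v \<in> gends G e \<and> gcol G e = c"
  using colored_graph by (simp add: colored_graph_def)

lemma color_edge_spec:
  assumes "v \<in> gV G" "c \<le> q"
  shows "color_edge G c v \<in> gE G" "v \<in> gends G (color_edge G c v)" "gcol G (color_edge G c v) = c"
  using theI'[OF unique_color_edge[OF assms]] by (simp_all add: color_edge_def)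

lemma color_edge_unique:
  assumes "e \<in> gE G" "v \<in> gends G e"
  shows "color_edge G (gcol G e) v = e"
  unfolding color_edge_def
  by (rule the1_equality[OF unique_color_edge[OF ends_in_vertices[OF assms] edge_color_le[OF assms(1)]]])
    (use assms in simp)

lemma edge_eq_if_common_end:
  "e \<in> gE G \<Longrightarrow> e' \<in> gE G \<Longrightarrow> gcol G e = gcol G e' \<Longrightarrow> v \<in> gends G e \<Longrightarrow> v \<in> gends G e'
    \<Longrightarrow> e = e'"
  by (metis color_edge_unique)

lemma black_white_ends:
  assumes "e \<in> gE G"
  shows "gends G e = {black_end G black e, white_end G black e}"
    "black (black_end G black e)" "\<not> black (white_end G black e)"
proof -
  obtain b w where bw: "gends G e = {b, w}" "black b" "\<not> black w"
    using rooted_bipartite assms by (auto simp: rooted_bipartite_def)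
  have "black_end G black e = b"
    unfolding black_end_def by (rule the_equality) (use bw in auto)
  moreover have "white_end G black e = w"
    unfolding white_end_def by (rule the_equality) (use bw in auto)
  ultimately
  show "gends G e = {black_end G black e, white_end G black e}"
    "black (black_end G black e)" "\<not> black (white_end G black e)"
    using bw by simp_all
qed

lemma black_end_in_vertices: "e \<in> gE G \<Longrightarrow> black_end G black e \<in> gV G"
  using black_white_ends(1) ends_in_vertices by blast

lemma white_end_in_vertices: "e \<in> gE G \<Longrightarrow> white_end G black e \<in> gV G"
  using black_white_ends(1) ends_in_vertices by blast

lemma black_end_eq:
  assumes "e \<in> gE G" "v \<in> gends G e" "black v"
  shows "black_end G black e = v"
  using black_white_ends[OF assms(1)] assms(2,3) by auto

lemma white_end_eq:
  assumes "e \<in> gE G" "v \<in> gends G e" "\<not> black v"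
  shows "white_end G black e = v"
  using black_white_ends[OF assms(1)] assms(2,3) by auto

lemma eq_if_same_side_of_edge:
  assumes "e \<in> gE G" "u \<in> gends G e" "v \<in> gends G e" "black u = black v"
  shows "u = v"
  using black_white_ends[OF assms(1)] assms(2-4) by auto

lemma black_end_color_edge:
  assumes "v \<in> gV G" "black v" "c \<le> q"
  shows "black_end G black (color_edge G c v) = v"
  using black_end_eq color_edge_spec assms by blast

lemma white_end_color_edge:
  assumes "v \<in> gV G" "\<not> black v" "c \<le> q"
  shows "white_end G black (color_edge G c v) = v"
  using white_end_eq color_edge_spec assms by blast

lemma white_end_color_edge_inj:
  assumes "v \<in> gV G" "v' \<in> gV G" "black v" "black v'" "c \<le> q"
    and eq: "white_end G black (color_edge G c v) = white_end G black (color_edge G c v')"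
  shows "v = v'"
proof -
  have "white_end G black (color_edge G c v) \<in> gends G (color_edge G c v')"
    using eq black_white_ends(1) color_edge_spec assms by simp
  then have "color_edge G c v = color_edge G c v'"
    using edge_eq_if_common_end color_edge_spec black_white_ends(1) assms by (metis insertCI)
  then show ?thesis
    using black_end_color_edge assms by metis
qed

lemma black_end_color_edge_inj:
  assumes "u \<in> gV G" "u' \<in> gV G" "\<not> black u" "\<not> black u'" "c \<le> q"
    and eq: "black_end G black (color_edge G c u) = black_end G black (color_edge G c u')"
  shows "u = u'"
proof -
  have "black_end G black (color_edge G c u) \<in> gends G (color_edge G c u')"
    using eq black_white_ends(1) color_edge_spec assms by simp
  then have "color_edge G c u = color_edge G c u'"
    using edge_eq_if_common_end color_edge_spec black_white_ends(1) assms by (metis insertCI)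
  then show ?thesis
    using white_end_color_edge assms by metis
qed

text \<open>The white vertices of the constellation are the colour-0 edges of G; \<open>contr_succ c f\<close> is
the successor of f on its directed colour-c cycle.\<close>

definition zero_edges :: "'e set" where
  "zero_edges = {f \<in> gE G. gcol G f = 0}"

definition contr_succ :: "nat \<Rightarrow> 'e \<Rightarrow> 'e" where
  "contr_succ c f = zero_edge G (white_end G black (color_edge G c (black_end G black f)))"

lemma zero_edge_in_zero_edges: "v \<in> gV G \<Longrightarrow> zero_edge G v \<in> zero_edges"
  using color_edge_spec[of v 0] by (simp add: zero_edges_def zero_edge_eq_color_edge)

lemma in_gends_zero_edge: "v \<in> gV G \<Longrightarrow> v \<in> gends G (zero_edge G v)"
  using color_edge_spec[of v 0] by (simp add: zero_edge_eq_color_edge)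

lemma zero_edge_eq: "f \<in> zero_edges \<Longrightarrow> v \<in> gends G f \<Longrightarrow> zero_edge G v = f"
  using color_edge_unique by (fastforce simp: zero_edges_def zero_edge_eq_color_edge)

lemma zero_edge_inj_on_side:
  assumes "u \<in> gV G" "v \<in> gV G" "black u = black v" "zero_edge G u = zero_edge G v"
  shows "u = v"
  using eq_if_same_side_of_edge zero_edge_in_zero_edges in_gends_zero_edge assms
  by (metis (mono_tags, lifting) mem_Collect_eq zero_edges_def)

lemma zero_edge_black_end: "f \<in> zero_edges \<Longrightarrow> zero_edge G (black_end G black f) = f"
  using zero_edge_eq black_white_ends(1) by (auto simp: zero_edges_def)

lemma black_end_zero_edge:
  "v \<in> gV G \<Longrightarrow> black v \<Longrightarrow> black_end G black (zero_edge G v) = v"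
  by (simp add: black_end_color_edge zero_edge_eq_color_edge)

lemma contr_succ_zero_edge:
  "v \<in> gV G \<Longrightarrow> black v \<Longrightarrow>
    contr_succ c (zero_edge G v) = zero_edge G (white_end G black (color_edge G c v))"
  by (simp add: contr_succ_def black_end_zero_edge)

lemma contr_succ_in_gends_zero_edges: "c \<le> q \<Longrightarrow> f \<in> zero_edges \<Longrightarrow> contr_succ c f \<in> zero_edges"
  unfolding contr_succ_def
  by (intro zero_edge_in_zero_edges white_end_in_vertices color_edge_spec black_end_in_vertices)
     (simp_all add: zero_edges_def)

lemma contr_arcs_iff:
  assumes "c \<le> q"
  shows "(f, f') \<in> contr_arcs G black c \<longleftrightarrow> f \<in> zero_edges \<and> f' = contr_succ c f"
proof
  assume "(f, f') \<in> contr_arcs G black c"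
  then obtain e where e: "e \<in> gE G" "gcol G e = c"
    and f: "f = zero_edge G (black_end G black e)" and f': "f' = zero_edge G (white_end G black e)"
    unfolding contr_arcs_def by blast
  have "black_end G black e \<in> gV G" "black (black_end G black e)"
    using e black_end_in_vertices black_white_ends(2) by auto
  moreover have "color_edge G c (black_end G black e) = e"
    using color_edge_unique e black_white_ends(1) by blast
  ultimately show "f \<in> zero_edges \<and> f' = contr_succ c f"
    using zero_edge_in_zero_edges f f' by (simp add: contr_succ_zero_edge)
next
  assume f: "f \<in> zero_edges \<and> f' = contr_succ c f"
  define e where "e = color_edge G c (black_end G black f)"
  have b: "black_end G black f \<in> gV G" "black (black_end G black f)"
    using f black_end_in_vertices black_white_ends(2) by (auto simp: zero_edges_def)
  then have "black_end G black e = black_end G black f"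
    using black_end_color_edge assms e_def by blast
  then have "f = zero_edge G (black_end G black e)" "f' = zero_edge G (white_end G black e)"
    using f zero_edge_black_end by (simp_all add: contr_succ_def e_def)
  moreover have "e \<in> gE G" "gcol G e = c"
    using color_edge_spec b assms e_def by auto
  ultimately show "(f, f') \<in> contr_arcs G black c"
    unfolding contr_arcs_def by blast
qed

lemma contr_succ_inj: "c \<le> q \<Longrightarrow> inj_on (contr_succ c) zero_edges"
proof (rule inj_onI)
  fix f f' assume c: "c \<le> q" and f: "f \<in> zero_edges" "f' \<in> zero_edges"
    and eq: "contr_succ c f = contr_succ c f'"
  define b where "b = black_end G black f"
  define b' where "b' = black_end G black f'"
  have b: "b \<in> gV G" "b' \<in> gV G" "black b" "black b'"
    using f black_end_in_vertices black_white_ends(2) by (auto simp: zero_edges_def b_def b'_def)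
  have "white_end G black (color_edge G c b) \<in> gV G" "white_end G black (color_edge G c b') \<in> gV G"
    "\<not> black (white_end G black (color_edge G c b))" "\<not> black (white_end G black (color_edge G c b'))"
    using b c color_edge_spec(1) white_end_in_vertices black_white_ends(3) by simp_all
  then have "white_end G black (color_edge G c b) = white_end G black (color_edge G c b')"
    using zero_edge_inj_on_side eq by (simp add: contr_succ_def b_def b'_def)
  then have "b = b'"
    using white_end_color_edge_inj b c by blast
  then show "f = f'"
    using zero_edge_black_end f by (metis b_def b'_def)
qed

lemma finite_zero_edges: "finite zero_edges"
  using finite_edges by (simp add: zero_edges_def)

lemma bij_betw_contr_succ: "c \<le> q \<Longrightarrow> bij_betw (contr_succ c) zero_edges zero_edges"
  by (intro finite_inj_endo_bij_betw finite_zero_edges contr_succ_inj image_subsetI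
      contr_succ_in_gends_zero_edges)

lemma contr_cycle_contr_succ:
  assumes "c \<le> q" "f \<in> zero_edges"
  shows "contr_cycle G black c (contr_succ c f) = contr_cycle G black c f"
proof -
  have arcs: "\<forall>f\<in>zero_edges. (f, contr_succ c f) \<in> contr_arcs G black c"
    by (simp add: contr_arcs_iff[OF assms(1)])
  then have return: "(contr_succ c f, f) \<in> (contr_arcs G black c)\<^sup>*"
    by (rule bij_betw_rtrancl_backward[OF finite_zero_edges bij_betw_contr_succ[OF assms(1)] assms(2)])
  have "(contr_succ c f, g) \<in> (contr_arcs G black c)\<^sup>* \<longleftrightarrow> (f, g) \<in> (contr_arcs G black c)\<^sup>*"
    for g
  proof
    show "(contr_succ c f, g) \<in> (contr_arcs G black c)\<^sup>* \<Longrightarrow> (f, g) \<in> (contr_arcs G black c)\<^sup>*"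
      using arcs assms(2) by (blast intro: converse_rtrancl_into_rtrancl)
    show "(f, g) \<in> (contr_arcs G black c)\<^sup>* \<Longrightarrow> (contr_succ c f, g) \<in> (contr_arcs G black c)\<^sup>*"
      using return by (rule rtrancl_trans)
  qed
  then show ?thesis
    unfolding contr_cycle_def by simp
qed

text \<open>\<open>hub c f\<close> is the colour-c vertex of the constellation on the colour-c cycle through the
white vertex f; \<open>out_edge c f\<close> is the edge of the constellation joining them, indexed as in
\<open>psi_edges\<close> by the colour-c edge of G at the black end of f.\<close>

definition hub :: "nat \<Rightarrow> 'e \<Rightarrow> 'e + nat \<times> 'e set" where
  "hub c f = Inr (c, contr_cycle G black c f)"

definition out_edge :: "nat \<Rightarrow> 'e \<Rightarrow> 'e" where
  "out_edge c f = color_edge G c (black_end G black f)"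

lemma hub_contr_succ: "c \<le> q \<Longrightarrow> f \<in> zero_edges \<Longrightarrow> hub c (contr_succ c f) = hub c f"
  by (simp add: hub_def contr_cycle_contr_succ)

lemma out_edge_spec:
  assumes "f \<in> zero_edges" "c \<le> q"
  shows "out_edge c f \<in> gE G" "gcol G (out_edge c f) = c"
    "psi_ends G black (out_edge c f) = {Inl f, hub c f}"
proof -
  have "black_end G black f \<in> gV G" "black (black_end G black f)"
    using assms black_end_in_vertices black_white_ends(2) by (auto simp: zero_edges_def)
  then show "out_edge c f \<in> gE G" "gcol G (out_edge c f) = c"
    "psi_ends G black (out_edge c f) = {Inl f, hub c f}"
    using assms color_edge_spec black_end_color_edge zero_edge_black_end
    by (simp_all add: out_edge_def hub_def psi_ends_def Let_def)
qed

lemma out_edge_in_psi_sub_edges: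
  "f \<in> zero_edges \<Longrightarrow> c \<in> {i, j} \<Longrightarrow> 1 \<le> c \<Longrightarrow> c \<le> q \<Longrightarrow> out_edge c f \<in> psi_sub_edges q G i j"
  using out_edge_spec by (auto simp: psi_sub_edges_def psi_edges_def)

text \<open>Given white vertices \<open>f l\<close> and \<open>g l = contr_succ i (f l) = contr_succ j (f (l + 1))\<close>, the walk
\<open>f l, hub i (f l), g l, hub j (g l), f (l + 1), \<dots>\<close> in the constellation, indexed by \<open>4 l + r\<close>.\<close>

definition orbit_vertex :: "nat \<Rightarrow> nat \<Rightarrow> (nat \<Rightarrow> 'e) \<Rightarrow> (nat \<Rightarrow> 'e) \<Rightarrow> nat \<Rightarrow> 'e + nat \<times> 'e set"
  where "orbit_vertex i j f g m =
    (let l = m div 4 in [Inl (f l), hub i (f l), Inl (g l), hub j (g l)] ! (m mod 4))"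

definition orbit_edge :: "nat \<Rightarrow> nat \<Rightarrow> (nat \<Rightarrow> 'e) \<Rightarrow> (nat \<Rightarrow> 'e) \<Rightarrow> nat \<Rightarrow> 'e"
  where "orbit_edge i j f g m =
    (let l = m div 4 in [out_edge i (f l), out_edge i (g l), out_edge j (g l), out_edge j (f (Suc l))]
      ! (m mod 4))"

lemma orbit_vertex_block:
  "r < 4 \<Longrightarrow> orbit_vertex i j f g (4 * l + r) = [Inl (f l), hub i (f l), Inl (g l), hub j (g l)] ! r"
  by (simp add: orbit_vertex_def)

lemma orbit_edge_block:
  "r < 4 \<Longrightarrow> orbit_edge i j f g (4 * l + r)
    = [out_edge i (f l), out_edge i (g l), out_edge j (g l), out_edge j (f (Suc l))] ! r"
  by (simp add: orbit_edge_def)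

context
  fixes i j :: nat and f g :: "nat \<Rightarrow> 'e"
  assumes colors: "1 \<le> i" "i \<le> q" "1 \<le> j" "j \<le> q" "i \<noteq> j"
    and f: "\<And>l. f l \<in> zero_edges"
    and succ_i: "\<And>l. contr_succ i (f l) = g l"
    and succ_j: "\<And>l. contr_succ j (f (Suc l)) = g l"
begin

lemma orbit_walk:
  "orbit_edge i j f g m \<in> psi_sub_edges q G i j \<and>
    psi_ends G black (orbit_edge i j f g m) = {orbit_vertex i j f g m, orbit_vertex i j f g (Suc m)}"
proof -
  have g: "g l \<in> zero_edges" for l
    using contr_succ_in_gends_zero_edges f succ_i colors by metis
  have hubs: "hub i (g l) = hub i (f l)" "hub j (g l) = hub j (f (Suc l))" for l
    using hub_contr_succ f succ_i succ_j colors by metis+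
  note edge = out_edge_in_psi_sub_edges out_edge_spec(3)
  show ?thesis
  proof (cases m rule: nat_div4_cases)
    case (1 l)
    then show ?thesis
      using orbit_edge_block[of 0 _ _ _ _ l] orbit_vertex_block[of 0 _ _ _ _ l]
        orbit_vertex_block[of 1 _ _ _ _ l] edge f colors
      by simp
  next
    case (2 l)
    then show ?thesis
      using orbit_edge_block[of 1 _ _ _ _ l] orbit_vertex_block[of 1 _ _ _ _ l]
        orbit_vertex_block[of 2 _ _ _ _ l] edge g hubs colors
      by (simp add: insert_commute)
  next
    case (3 l)
    then show ?thesis
      using orbit_edge_block[of 2 _ _ _ _ l] orbit_vertex_block[of 2 _ _ _ _ l]
        orbit_vertex_block[of 3 _ _ _ _ l] edge g colors
      by (simp add: eval_nat_numeral)
  next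
    case (4 l)
    then show ?thesis
      using orbit_edge_block[of 3 _ _ _ _ l] orbit_vertex_block[of 3 _ _ _ _ l]
        orbit_vertex_block[of 0 _ _ _ _ "Suc l"] edge f hubs colors
      by (simp add: eval_nat_numeral insert_commute)
  qed
qed

lemma contr_orbit_has_cycle:
  assumes period: "0 < k" "f k = f 0"
    and first_return: "\<And>l. 0 < l \<Longrightarrow> l < k \<Longrightarrow> f l \<noteq> f 0"
    and g_avoids: "\<And>l. g l \<noteq> f 0"
  shows "has_cycle (psi_sub_edges q G i j) (psi_ends G black)"
proof (rule closed_walk_has_cycle)
  show "\<forall>m<4 * k. orbit_edge i j f g m \<in> psi_sub_edges q G i j \<and>
      psi_ends G black (orbit_edge i j f g m) = {orbit_vertex i j f g m, orbit_vertex i j f g (Suc m)}"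
    using orbit_walk by blast
  show "orbit_vertex i j f g (4 * k) = orbit_vertex i j f g 0"
    using period by (simp add: orbit_vertex_def)
  show "\<forall>m. 0 < m \<and> m < 4 * k \<longrightarrow> orbit_vertex i j f g m \<noteq> orbit_vertex i j f g 0"
  proof (intro allI impI)
    fix m assume m: "0 < m \<and> m < 4 * k"
    have start: "orbit_vertex i j f g 0 = Inl (f 0)"
      by (simp add: orbit_vertex_def)
    show "orbit_vertex i j f g m \<noteq> orbit_vertex i j f g 0"
    proof (cases m rule: nat_div4_cases)
      case (1 l)
      then have "0 < l" "l < k"
        using m by auto
      then show ?thesis
        using 1 orbit_vertex_block[of 0 i j f g l] start first_return by simp
    next
      case (2 l)
      then show ?thesis
        using orbit_vertex_block[of 1 i j f g l] start by (simp add: hub_def)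
    next
      case (3 l)
      then show ?thesis
        using orbit_vertex_block[of 2 i j f g l] start g_avoids by simp
    next
      case (4 l)
      then show ?thesis
        using orbit_vertex_block[of 3 i j f g l] start by (simp add: hub_def eval_nat_numeral)
    qed
  qed
  have "4 * k - 1 = 4 * (k - 1) + 3"
    using period by simp
  then have "gcol G (orbit_edge i j f g (4 * k - 1)) = j"
    using out_edge_spec(2) f colors by (simp add: orbit_edge_def)
  moreover have "gcol G (orbit_edge i j f g 0) = i"
    using out_edge_spec(2) f colors by (simp add: orbit_edge_def)
  ultimately show "orbit_edge i j f g 0 \<noteq> orbit_edge i j f g (4 * k - 1)"
    using colors by metis
qed

end

lemma black_white_adj_rel:
  "e \<in> gE G \<Longrightarrow> gcol G e \<in> C \<Longrightarrow> (black_end G black e, white_end G black e) \<in> adj_rel G C"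
  using black_white_ends(1) unfolding adj_rel_def by blast

lemma white_end_color_edge_spec:
  assumes "v \<in> gV G" "c \<le> q"
  shows "white_end G black (color_edge G c v) \<in> gV G" "\<not> black (white_end G black (color_edge G c v))"
  using assms color_edge_spec(1) white_end_in_vertices black_white_ends(3) by simp_all

definition black_vertices :: "'v set" where
  "black_vertices = {v \<in> gV G. black v}"

lemma finite_black_vertices: "finite black_vertices"
  using finite_vertices by (simp add: black_vertices_def)

definition ij_step :: "nat \<Rightarrow> nat \<Rightarrow> 'v \<Rightarrow> 'v" where
  "ij_step i j v = black_end G black (color_edge G j (white_end G black (color_edge G i v)))"

context
  fixes i j :: nat
  assumes colors: "i \<le> q" "j \<le> q"
begin

lemma ij_step_in_black_vertices: "v \<in> black_vertices \<Longrightarrow> ij_step i j v \<in> black_vertices"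
  using white_end_color_edge_spec colors color_edge_spec black_end_in_vertices black_white_ends(2)
  by (simp add: ij_step_def black_vertices_def)

lemma ij_step_adj_rel:
  assumes "v \<in> black_vertices"
  shows "(v, white_end G black (color_edge G i v)) \<in> adj_rel G {i, j}"
    "(white_end G black (color_edge G i v), ij_step i j v) \<in> adj_rel G {i, j}"
proof -
  define u where "u = white_end G black (color_edge G i v)"
  have v: "v \<in> gV G" "black v"
    using assms by (auto simp: black_vertices_def)
  have u: "u \<in> gV G" "\<not> black u"
    using white_end_color_edge_spec v colors by (simp_all add: u_def)
  have "(black_end G black (color_edge G i v), u) \<in> adj_rel G {i, j}"
    unfolding u_def by (rule black_white_adj_rel) (simp_all add: color_edge_spec v colors)
  then show "(v, white_end G black (color_edge G i v)) \<in> adj_rel G {i, j}"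
    using black_end_color_edge[OF v colors(1)] by (simp add: u_def)
  have "(ij_step i j v, white_end G black (color_edge G j u)) \<in> adj_rel G {i, j}"
    unfolding ij_step_def u_def[symmetric]
    by (rule black_white_adj_rel) (simp_all add: color_edge_spec u colors)
  then show "(white_end G black (color_edge G i v), ij_step i j v) \<in> adj_rel G {i, j}"
    using white_end_color_edge[OF u colors(2)] symD[OF sym_adj_rel] by (simp add: u_def)
qed

lemma ij_step_inj: "inj_on (ij_step i j) black_vertices"
proof (rule inj_onI)
  fix v v' assume "v \<in> black_vertices" "v' \<in> black_vertices"
    and eq: "ij_step i j v = ij_step i j v'"
  then have v: "v \<in> gV G" "v' \<in> gV G" "black v" "black v'"
    by (simp_all add: black_vertices_def)
  note u = white_end_color_edge_spec[OF v(1) colors(1)] white_end_color_edge_spec[OF v(2) colors(1)]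
  have "white_end G black (color_edge G i v) = white_end G black (color_edge G i v')"
    using eq unfolding ij_step_def by (rule black_end_color_edge_inj[OF u(1,3,2,4) colors(2)])
  then show "v = v'"
    using white_end_color_edge_inj v colors by blast
qed

lemma bij_betw_ij_step: "bij_betw (ij_step i j) black_vertices black_vertices"
  by (intro finite_inj_endo_bij_betw finite_black_vertices ij_step_inj image_subsetI
      ij_step_in_black_vertices)

lemma funpow_ij_step_in_black_vertices:
  "v \<in> black_vertices \<Longrightarrow> (ij_step i j ^^ l) v \<in> black_vertices"
  using bij_betwE[OF bij_betw_funpow[OF bij_betw_ij_step]] by blast

lemma funpow_ij_step_connected:
  "v \<in> black_vertices \<Longrightarrow> (v, (ij_step i j ^^ l) v) \<in> (adj_rel G {i, j})\<^sup>*"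
proof (induction l)
  case (Suc l)
  then show ?case
    using ij_step_adj_rel[OF funpow_ij_step_in_black_vertices[OF Suc.prems, of l]]
    by (metis funpow.simps(2) comp_apply rtrancl.rtrancl_into_rtrancl)
qed simp

lemma contr_succ_zero_edge_ij_step:
  assumes "v \<in> black_vertices"
  shows "contr_succ j (zero_edge G (ij_step i j v)) = contr_succ i (zero_edge G v)"
proof -
  define u where "u = white_end G black (color_edge G i v)"
  have u: "u \<in> gV G" "\<not> black u"
    using white_end_color_edge_spec assms colors by (simp_all add: u_def black_vertices_def)
  have "ij_step i j v \<in> gV G" "black (ij_step i j v)"
    using ij_step_in_black_vertices assms by (auto simp: black_vertices_def)
  moreover have "color_edge G j (ij_step i j v) = color_edge G j u"
    using color_edge_unique color_edge_spec u colors black_white_ends(1)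
    by (metis ij_step_def insertI1 u_def)
  ultimately show ?thesis
    using assms u colors white_end_color_edge
    by (simp add: contr_succ_zero_edge black_vertices_def u_def)
qed

end

lemma zero_edge_ends_connected:
  assumes colors: "1 \<le> i" "i \<le> q" "1 \<le> j" "j \<le> q" "i \<noteq> j"
    and forest: "is_forest (psi_sub_edges q G i j) (psi_ends G black)"
    and f: "f \<in> zero_edges"
  shows "(black_end G black f, white_end G black f) \<in> (adj_rel G {i, j})\<^sup>*"
proof (rule ccontr)
  define b where "b = black_end G black f"
  define w where "w = white_end G black f"
  define v where "v l = (ij_step i j ^^ l) b" for l
  define u where "u l = white_end G black (color_edge G i (v l))" for l
  assume "(black_end G black f, white_end G black f) \<notin> (adj_rel G {i, j})\<^sup>*"
  then have disconnected: "(b, w) \<notin> (adj_rel G {i, j})\<^sup>*"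
    by (simp add: b_def w_def)
  have fE: "f \<in> gE G"
    using f by (simp add: zero_edges_def)
  have b: "b \<in> black_vertices"
    using black_end_in_vertices black_white_ends(2) fE by (simp add: b_def black_vertices_def)
  have w: "w \<in> gV G" "\<not> black w"
    using white_end_in_vertices black_white_ends(3) fE by (simp_all add: w_def)
  have v: "v l \<in> gV G" "black (v l)" for l
    using funpow_ij_step_in_black_vertices b colors by (simp_all add: v_def black_vertices_def)
  have u: "u l \<in> gV G" "\<not> black (u l)" for l
    using white_end_color_edge_spec v colors by (simp_all add: u_def)
  have "u l \<noteq> w" for l
    using funpow_ij_step_connected[OF _ _ b] ij_step_adj_rel(1)[of i j "v l"] b v colors
      disconnected
    by (metis rtrancl.rtrancl_into_rtrancl u_def v_def black_vertices_def mem_Collect_eq)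
  then have "zero_edge G (u l) \<noteq> zero_edge G w" for l
    using zero_edge_inj_on_side u w by metis
  moreover have "zero_edge G (v 0) = zero_edge G w"
    using zero_edge_eq[OF f] black_white_ends(1)[OF fE] by (simp add: v_def b_def w_def)
  moreover have "contr_succ i (zero_edge G (v l)) = zero_edge G (u l)" for l
    using contr_succ_zero_edge v by (simp add: u_def)
  ultimately have g_avoids: "contr_succ i (zero_edge G (v l)) \<noteq> zero_edge G (v 0)" for l
    by simp
  obtain k where k: "0 < k" "v k = b" and first_return: "\<And>l. 0 < l \<Longrightarrow> l < k \<Longrightarrow> v l \<noteq> b"
    using bij_betw_funpow_least_period[OF finite_black_vertices bij_betw_ij_step b] colors
    by (auto simp: v_def)
  have "has_cycle (psi_sub_edges q G i j) (psi_ends G black)"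
  proof (rule contr_orbit_has_cycle[OF colors, of "\<lambda>l. zero_edge G (v l)"])
    show "zero_edge G (v l) \<in> zero_edges" for l
      using v zero_edge_in_zero_edges by simp
    show "contr_succ j (zero_edge G (v (Suc l))) = contr_succ i (zero_edge G (v l))" for l
      using contr_succ_zero_edge_ij_step colors funpow_ij_step_in_black_vertices b by (simp add: v_def)
    show "zero_edge G (v l) \<noteq> zero_edge G (v 0)" if "0 < l" "l < k" for l
      using zero_edge_inj_on_side v first_return that by (metis v_def funpow_0)
  qed (use k g_avoids in \<open>simp_all add: v_def\<close>)
  with forest show False
    by (simp add: is_forest_def)
qed

end

theorem mainTheorem18:
  fixes q i j :: nat and G :: "('v, 'e) cgraph" and black :: "'v \<Rightarrow> bool"
  assumes "q \<ge> 2"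
    and "rooted_bipartite q G black"
    and "1 \<le> i" "i \<le> q" "1 \<le> j" "j \<le> q" "i \<noteq> j"
    and "is_forest (psi_sub_edges q G i j) (psi_ends G black)"
  shows "\<forall>f\<in>gE G. gcol G f = 0 \<longrightarrow>
           (\<forall>u\<in>gends G f. \<forall>v\<in>gends G f. (u, v) \<in> (adj_rel G {i, j})\<^sup>*)"
proof (intro ballI impI)
  interpret rooted_bipartite_graph q G black
    using assms(2) by unfold_locales
  fix f u v
  assume "f \<in> gE G" "gcol G f = 0" and uv: "u \<in> gends G f" "v \<in> gends G f"
  then have "f \<in> zero_edges"
    by (simp add: zero_edges_def)
  then have "(black_end G black f, white_end G black f) \<in> (adj_rel G {i, j})\<^sup>*"
    using zero_edge_ends_connected assms(3-8) by blast
  moreover have "gends G f = {black_end G black f, white_end G black f}"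
    using black_white_ends(1) \<open>f \<in> gE G\<close> .
  ultimately show "(u, v) \<in> (adj_rel G {i, j})\<^sup>*"
    using uv symD[OF sym_rtrancl[OF sym_adj_rel]] by auto
qed

end
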